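(* Let $q\in\mathbb{N}_0$ and let $\nu$ be a charge on $\mathbb{C}$ such that for some $r_0>0$ the integrals $\int_{D(r_0)\cap\mathbb{C}^{\rm up}}\operatorname{Im}\frac1{z^k}d\nu(z)$, $1\le k\le q$, converge, and such that the restriction of $\nu$ to $\mathbb{C}^{\rm up}$ belongs to the convergence class at order of growth $q+1$ near $\infty$. Then the balayage $\nu^{\mathrm{bal}[q]}$ of genus $q$ exists as a charge on $\mathbb{C}$. If moreover $D(r_0)\cap\operatorname{supp}\nu=\varnothing$ for some $r_0>0$, then $|\nu^{\mathrm{bal}[q]}|^{\rm rad}(t)=O(t^{q+1})$ as $t\to0$.
   Context: A charge is a real Borel signed measure on $\mathbb{C}$ finite on bounded sets, $|\nu|$ its total variation, $|\nu|^{\rm rad}(r)=|\nu|(\{|z|\le r\})$, $D(r)=\{|z|<r\}$, $\mathbb{C}^{\rm up}=\{\operatorname{Im}z>0\}$. A charge $\mu$ belongs to the convergence class at order of growth $s$ near $\infty$ if $\int_1^{+\infty}t^{-s}d|\mu|^{\rm rad}(t)<\infty$. For $z\in\mathbb{C}^{\rm up}$ and bounded Borel $B$: $\Omega^{[q]}(z,B)=\frac1\pi\int_{B\cap\mathbb{R}}\operatorname{Im}\frac1{t-z}dt+\frac1\pi\sum_{k=1}^q\operatorname{Im}(z^{-k})\int_{B\cap\mathbb{R}}t^{k-1}dt$; the balayage of genus $q$ from $\mathbb{C}^{\rm up}$ is $\nu^{\mathrm{bal}[q]}(B)=\int_{\mathbb{C}^{\rm up}}\Omega^{[q]}(z,B)d\nu(z)+\nu(B\setminus\mathbb{C}^{\rm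 up})$ (existence meaning the integrals converge and define a charge). *)

theory Defs
  imports "HOL-Analysis.Analysis" "HOL-Library.Landau_Symbols"
begin

text \<open>A charge (real Borel signed measure on the complex plane, finite on bounded sets)
  is represented by its Jordan decomposition: a pair (P, N) of mutually singular
  positive Borel measures on the complex plane, both finite on bounded sets.
  The charge is nu = P - N and its total variation is P + N.\<close>

definition charge :: "complex measure \<Rightarrow> complex measure \<Rightarrow> bool" where
  "charge P N \<longleftrightarrow>
     sets P = sets borel \<and> sets N = sets borel \<and>
     (\<forall>B\<in>sets borel. bounded B \<longrightarrow> emeasure P B < \<infinity> \<and> emeasure N B < \<infinity>) \<and>
     (\<exists>A\<in>sets borel. emeasure P (- A) = 0 \<and> emeasure N A = 0)"

definition charge_val :: "complex measure \<Rightarrow> complex measure \<Rightarrow> complex set \<Rightarrow> real" where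
  "charge_val P N B = measure P B - measure N B"

definition rad_tv :: "complex measure \<Rightarrow> complex measure \<Rightarrow> real \<Rightarrow> real" where
  "rad_tv P N r = measure P (cball 0 r) + measure N (cball 0 r)"

definition Cup :: "complex set" where
  "Cup = {z. Im z > 0}"

definition restr_up :: "complex measure \<Rightarrow> complex measure" where
  "restr_up P = density P (indicator Cup)"

definition convergence_class :: "complex measure \<Rightarrow> complex measure \<Rightarrow> real \<Rightarrow> bool" where
  "convergence_class P N s \<longleftrightarrow>
     (\<integral>\<^sup>+ t. indicator {1..} t * ennreal (t powr (- s)) \<partial>interval_measure (rad_tv P N)) < \<infinity>"

definition charge_support :: "complex measure \<Rightarrow> complex measure \<Rightarrow> complex set" where
  "charge_support P N = {z. \<forall>e>0. emeasure P (ball z e) + emeasure N (ball z e) > 0}"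

definition Omega :: "nat \<Rightarrow> complex \<Rightarrow> complex set \<Rightarrow> real" where
  "Omega q z B =
     (1 / pi) * (LINT t:{t::real. complex_of_real t \<in> B}|lborel. Im (1 / (complex_of_real t - z)))
   + (1 / pi) * (\<Sum>k=1..q. Im (inverse (z ^ k)) *
                   (LINT t:{t::real. complex_of_real t \<in> B}|lborel. t ^ (k - 1)))"

definition is_balayage :: "nat \<Rightarrow> complex measure \<Rightarrow> complex measure \<Rightarrow>
                             complex measure \<Rightarrow> complex measure \<Rightarrow> bool" where
  "is_balayage q P N P' N' \<longleftrightarrow>
     charge P' N' \<and>
     (\<forall>B\<in>sets borel. bounded B \<longrightarrow>
        set_integrable P Cup (\<lambda>z. Omega q z B) \<and>
        set_integrable N Cup (\<lambda>z. Omega q z B) \<and>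
        charge_val P' N' B =
          (LINT z:Cup|P. Omega q z B) - (LINT z:Cup|N. Omega q z B)
          + charge_val P N (B - Cup))"

end

theory Submission
  imports Defs
begin

text \<open>The kernel \<Omega>^[q](z, .) has on the real line the density
  (1/pi) Im (t^q / (z^q (t - z))): the Poisson kernel minus its Taylor polynomial of degree
  q - 1 in t. On [-R, R] its L^1 norm is at most 1 + O(\<Sum>k\<le>q |Im z^-k|) when |z| < 2R,
  which is integrable near the origin by the hypothesis on Im z^-k, and O(R^(q+1) / |z|^(q+1))
  when |z| \<ge> 2R, which is integrable near infinity by the convergence class condition.
  By Fubini's theorem the part of nu^bal coming from the upper half-plane is then f(t) dt with
  f locally integrable, and nu^bal is the Jordan decomposition (obtained via Radon-Nikodym) of
  f(t) dt plus nu restricted to the closed lower half-plane. If nu vanishes near 0, then for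
  B in the closed disc of radius t only |z| \<ge> 2t contributes, so |nu^bal(B)| = O(t^(q+1)),
  and the Hahn decomposition turns this into the bound on |nu^bal|^rad.\<close>

section \<open>Sums of measures and Jordan decompositions\<close>

definition add_measure :: "'a measure \<Rightarrow> 'a measure \<Rightarrow> 'a measure" where
  "add_measure M1 M2 = measure_of (space M1) (sets M1) (\<lambda>A. emeasure M1 A + emeasure M2 A)"

lemma sets_add_measure [simp, measurable_cong]: "sets (add_measure M1 M2) = sets M1"
  by (simp add: add_measure_def sets.sigma_sets_eq sets.space_closed)

lemma emeasure_add_measure:
  assumes "sets M2 = sets M1" "A \<in> sets M1"
  shows "emeasure (add_measure M1 M2) A = emeasure M1 A + emeasure M2 A"
  unfolding add_measure_def
proof (rule emeasure_measure_of_sigma)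
  show "sigma_algebra (space M1) (sets M1)" by (rule sets.sigma_algebra_axioms)
  show "positive (sets M1) (\<lambda>A. emeasure M1 A + emeasure M2 A)" by (simp add: positive_def)
  show "countably_additive (sets M1) (\<lambda>A. emeasure M1 A + emeasure M2 A)"
    unfolding countably_additive_def
  proof (intro allI impI)
    fix F :: "nat \<Rightarrow> 'a set"
    assume F: "range F \<subseteq> sets M1" "disjoint_family F" "\<Union>(range F) \<in> sets M1"
    have "(\<Sum>i. emeasure M1 (F i) + emeasure M2 (F i)) = (\<Sum>i. emeasure M1 (F i)) + (\<Sum>i. emeasure M2 (F i))"
      by (rule suminf_add[symmetric]) auto
    also have "\<dots> = emeasure M1 (\<Union>(range F)) + emeasure M2 (\<Union>(range F))"
      using F assms by (simp add: suminf_emeasure)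
    finally show "(\<Sum>i. emeasure M1 (F i) + emeasure M2 (F i)) = emeasure M1 (\<Union>(range F)) + emeasure M2 (\<Union>(range F))" .
  qed
qed (rule assms(2))

lemma le_add_measure:
  assumes "sets M2 = sets M1"
  shows "M1 \<le> add_measure M1 M2"
  using assms by (subst le_measure) (auto simp: emeasure_add_measure)

lemma sigma_finite_measure_if_finite_cball:
  fixes M :: "'a::real_normed_vector measure"
  assumes "sets M = sets borel" "\<And>r. emeasure M (cball 0 r) < \<infinity>"
  shows "sigma_finite_measure M"
proof
  let ?C = "range (\<lambda>n::nat. cball (0::'a) (real n))"
  have "\<Union> ?C = UNIV"
  proof (intro set_eqI iffI)
    fix x :: 'a
    obtain n :: nat where "norm x \<le> real n" using real_arch_simple by blast
    then show "x \<in> \<Union> ?C" by auto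
  qed auto
  moreover have "emeasure M (cball 0 r) \<noteq> \<infinity>" for r
    using assms(2)[of r] by auto
  then have "?C \<subseteq> sets M" "\<forall>a\<in>?C. emeasure M a \<noteq> \<infinity>"
    using assms(1) by auto
  ultimately show "\<exists>A. countable A \<and> A \<subseteq> sets M \<and> \<Union> A = space M \<and> (\<forall>a\<in>A. emeasure M a \<noteq> \<infinity>)"
    using sets_eq_imp_space_eq[OF assms(1)] by (intro exI[of _ ?C]) auto
qed

lemma ennreal_excess_add_eq_max:
  fixes a b :: ennreal
  shows "(if b \<le> a then a - b else 0) + b = max a b"
    and "(if b < a then a - b else 0) + b = max a b"
proof -
  have *: "(a - b) + b = max a b" if "b \<le> a"
    using that by (cases a; cases b) (auto simp: ennreal_minus top_unique simp flip: ennreal_plus)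
  show "(if b \<le> a then a - b else 0) + b = max a b"
    using * by (auto simp: max_def)
  show "(if b < a then a - b else 0) + b = max a b"
    using * by (auto simp: max_def)
qed

lemma emeasure_density_add_eq_max:
  assumes [measurable]: "d \<in> borel_measurable M" "g \<in> borel_measurable M"
    and B: "B \<in> sets M" and dg: "\<And>x. d x + g x = max (h x) (g x)"
  shows "emeasure (density M d) B + emeasure (density M g) B = (\<integral>\<^sup>+x. max (h x) (g x) * indicator B x \<partial>M)"
proof -
  have "emeasure (density M d) B + emeasure (density M g) B
      = (\<integral>\<^sup>+x. d x * indicator B x + g x * indicator B x \<partial>M)"
    using B by (simp add: emeasure_density nn_integral_add)
  also have "\<dots> = (\<integral>\<^sup>+x. max (h x) (g x) * indicator B x \<partial>M)"
    by (intro nn_integral_cong) (simp only: distrib_right[symmetric] dg)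
  finally show ?thesis .
qed

text \<open>The second density uses a strict inequality because top - top = top in ennreal; with
  a non-strict one N would not vanish on the set where h2 \<le> h1.\<close>

lemma Jordan_parts_of_densities:
  fixes \<mu> :: "'a measure" and h1 h2 :: "'a \<Rightarrow> ennreal"
  assumes [measurable]: "h1 \<in> borel_measurable \<mu>" "h2 \<in> borel_measurable \<mu>"
  defines "P \<equiv> density \<mu> (\<lambda>x. if h2 x \<le> h1 x then h1 x - h2 x else 0)"
    and "N \<equiv> density \<mu> (\<lambda>x. if h1 x < h2 x then h2 x - h1 x else 0)"
  shows "B \<in> sets \<mu> \<Longrightarrow> emeasure P B + emeasure (density \<mu> h2) B = emeasure N B + emeasure (density \<mu> h1) B"
    and "B \<in> sets \<mu> \<Longrightarrow> emeasure P B \<le> emeasure (density \<mu> h1) B"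
    and "B \<in> sets \<mu> \<Longrightarrow> emeasure N B \<le> emeasure (density \<mu> h2) B"
    and "emeasure P (space \<mu> - {x \<in> space \<mu>. h2 x \<le> h1 x}) = 0"
    and "emeasure N {x \<in> space \<mu>. h2 x \<le> h1 x} = 0"
proof -
  assume B: "B \<in> sets \<mu>"
  have "emeasure P B + emeasure (density \<mu> h2) B = (\<integral>\<^sup>+x. max (h1 x) (h2 x) * indicator B x \<partial>\<mu>)"
    unfolding P_def using B by (intro emeasure_density_add_eq_max ennreal_excess_add_eq_max) auto
  moreover have "emeasure N B + emeasure (density \<mu> h1) B = (\<integral>\<^sup>+x. max (h2 x) (h1 x) * indicator B x \<partial>\<mu>)"
    unfolding N_def using B by (intro emeasure_density_add_eq_max ennreal_excess_add_eq_max) auto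
  ultimately show "emeasure P B + emeasure (density \<mu> h2) B = emeasure N B + emeasure (density \<mu> h1) B"
    by (simp add: max.commute)
next
  show "emeasure P B \<le> emeasure (density \<mu> h1) B" "emeasure N B \<le> emeasure (density \<mu> h2) B"
    if "B \<in> sets \<mu>"
    unfolding P_def N_def using that
    by (auto simp: emeasure_density intro!: nn_integral_mono mult_right_mono diff_le_self_ennreal)
next
  show "emeasure P (space \<mu> - {x \<in> space \<mu>. h2 x \<le> h1 x}) = 0"
    "emeasure N {x \<in> space \<mu>. h2 x \<le> h1 x} = 0"
    unfolding P_def N_def by (auto simp: emeasure_density indicator_def nn_integral_0_iff_AE)
qed

lemma charge_of_measure_diff:
  fixes M1 M2 :: "complex measure"
  assumes s1: "sets M1 = sets borel" and s2: "sets M2 = sets borel"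
    and f1: "\<And>B. B \<in> sets borel \<Longrightarrow> bounded B \<Longrightarrow> emeasure M1 B < \<infinity>"
    and f2: "\<And>B. B \<in> sets borel \<Longrightarrow> bounded B \<Longrightarrow> emeasure M2 B < \<infinity>"
  shows "\<exists>P' N'. charge P' N' \<and>
     (\<forall>B\<in>sets borel. bounded B \<longrightarrow> charge_val P' N' B = measure M1 B - measure M2 B)"
proof -
  define \<mu> where "\<mu> = add_measure M1 M2"
  have s\<mu>: "sets \<mu> = sets borel" using s1 by (simp add: \<mu>_def)
  have e\<mu>: "emeasure \<mu> B = emeasure M1 B + emeasure M2 B" if "B \<in> sets borel" for B
    unfolding \<mu>_def using s1 s2 that by (intro emeasure_add_measure) auto
  interpret sigma_finite_measure \<mu>
    using s\<mu> f1 f2 by (intro sigma_finite_measure_if_finite_cball)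
      (auto simp: e\<mu> ennreal_add_less_top borel_closed)
  have "absolutely_continuous \<mu> M1" "absolutely_continuous \<mu> M2"
    unfolding absolutely_continuous_def using e\<mu> s\<mu> s1 s2 by (auto simp: null_sets_def)
  from this[THEN Radon_Nikodym] s1 s2 s\<mu> obtain h1 h2 where
    h1: "h1 \<in> borel_measurable \<mu>" "density \<mu> h1 = M1" and
    h2: "h2 \<in> borel_measurable \<mu>" "density \<mu> h2 = M2"
    by (metis sets_eq_imp_space_eq)
  define P' where "P' = density \<mu> (\<lambda>x. if h2 x \<le> h1 x then h1 x - h2 x else 0)"
  define N' where "N' = density \<mu> (\<lambda>x. if h1 x < h2 x then h2 x - h1 x else 0)"
  define A where "A = {x \<in> space \<mu>. h2 x \<le> h1 x}"
  note Jordan = Jordan_parts_of_densities[OF h1(1) h2(1), folded P'_def N'_def, unfolded h1(2) h2(2) s\<mu>]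
  have "A \<in> sets borel"
    unfolding A_def s\<mu>[symmetric] using h1(1) h2(1) by measurable
  moreover have "- A = space \<mu> - A"
    using sets_eq_imp_space_eq[OF s\<mu>] by auto
  moreover have finite: "emeasure P' B < \<infinity>" "emeasure N' B < \<infinity>" if "B \<in> sets borel" "bounded B" for B
    using Jordan(2,3)[OF that(1)] f1[OF that] f2[OF that] by (auto intro: le_less_trans)
  moreover have "emeasure P' (- A) = 0" "emeasure N' A = 0"
    using Jordan(4,5) \<open>- A = space \<mu> - A\<close> by (simp_all add: A_def)
  moreover have "sets P' = sets borel" "sets N' = sets borel"
    using s\<mu> by (simp_all add: P'_def N'_def)
  ultimately have "charge P' N'"
    unfolding charge_def by blast
  moreover have "charge_val P' N' B = measure M1 B - measure M2 B" if B: "B \<in> sets borel" "bounded B" for B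
  proof -
    have "measure P' B + measure M2 B = measure N' B + measure M1 B"
      using Jordan(1)[OF B(1)] finite[OF B] f1[OF B] f2[OF B]
      by (simp add: measure_def enn2real_plus[symmetric] less_top)
    then show ?thesis unfolding charge_val_def by linarith
  qed
  ultimately show ?thesis by blast
qed

lemma charge_sym: "charge P N \<Longrightarrow> charge N P"
  unfolding charge_def by (metis Compl_eq_Diff_UNIV double_complement sets.compl_sets space_borel)

lemma charge_finite_cball:
  assumes "charge P N"
  shows "emeasure P (cball 0 r) < \<infinity>" "emeasure N (cball 0 r) < \<infinity>"
  using assms unfolding charge_def by (auto simp: borel_closed)

section \<open>The kernel of genus q\<close>

definition Omega_density :: "nat \<Rightarrow> complex \<Rightarrow> real \<Rightarrow> real" where
  "Omega_density q z t =
     (1/pi) * (Im (1 / (complex_of_real t - z)) + (\<Sum>k=1..q. Im (inverse (z ^ k)) * t ^ (k - 1)))"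

lemma Omega_density_measurable [measurable]:
  assumes [measurable]: "f \<in> borel_measurable M" "g \<in> borel_measurable M"
  shows "(\<lambda>x. Omega_density q (f x) (g x)) \<in> borel_measurable M"
  unfolding Omega_density_def by measurable

lemma inverse_diff_add_geometric_sum:
  fixes z u :: complex
  assumes "z \<noteq> 0" "u \<noteq> z"
  shows "1 / (u - z) + (\<Sum>k=1..q. inverse (z ^ k) * u ^ (k - 1)) = u ^ q / (z ^ q * (u - z))"
proof (induction q)
  case (Suc q)
  have "1 / (u - z) + (\<Sum>k=1..Suc q. inverse (z ^ k) * u ^ (k - 1))
      = u ^ q / (z ^ q * (u - z)) + inverse (z ^ Suc q) * u ^ q"
    using Suc by (simp add: add.assoc)
  also have "\<dots> = u ^ Suc q / (z ^ Suc q * (u - z))"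
    using assms by (simp add: field_simps)
  finally show ?case .
qed simp

lemma Omega_density_eq:
  assumes "z \<noteq> 0" "complex_of_real t \<noteq> z"
  shows "Omega_density q z t = (1/pi) * Im (complex_of_real t ^ q / (z ^ q * (complex_of_real t - z)))"
proof -
  have "Im (1 / (complex_of_real t - z) + (\<Sum>k=1..q. inverse (z ^ k) * complex_of_real t ^ (k - 1)))
     = Im (1 / (complex_of_real t - z)) + (\<Sum>k=1..q. Im (inverse (z ^ k)) * t ^ (k - 1))"
    by (simp add: Im_sum flip: of_real_power)
  then show ?thesis
    unfolding Omega_density_def inverse_diff_add_geometric_sum[OF assms] by simp
qed

lemma abs_Omega_density_le_far:
  assumes "z \<noteq> 0" "\<bar>t\<bar> \<le> norm z / 2"
  shows "\<bar>Omega_density q z t\<bar> \<le> 2 / pi * \<bar>t\<bar> ^ q / norm z ^ (q + 1)"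
proof -
  have nz: "norm z / 2 \<le> norm (complex_of_real t - z)"
    using norm_triangle_ineq2[of z "complex_of_real t"] assms(2) by (simp add: norm_minus_commute)
  have ne: "complex_of_real t \<noteq> z" using assms nz by auto
  have pos: "0 < norm z" using assms by simp
  have "\<bar>Omega_density q z t\<bar> = (1/pi) * \<bar>Im (complex_of_real t ^ q / (z ^ q * (complex_of_real t - z)))\<bar>"
    unfolding Omega_density_eq[OF assms(1) ne] by (simp add: abs_mult)
  also have "\<dots> \<le> (1/pi) * norm (complex_of_real t ^ q / (z ^ q * (complex_of_real t - z)))"
    by (intro mult_left_mono abs_Im_le_cmod) auto
  also have "norm (complex_of_real t ^ q / (z ^ q * (complex_of_real t - z)))
           = \<bar>t\<bar> ^ q / (norm z ^ q * norm (complex_of_real t - z))"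
    by (simp add: norm_divide norm_mult norm_power)
  also have "\<dots> \<le> \<bar>t\<bar> ^ q / (norm z ^ q * (norm z / 2))"
    using pos nz by (intro divide_left_mono mult_left_mono mult_pos_pos) auto
  finally show ?thesis
    using pos by (simp add: field_simps)
qed

lemma Im_inverse_of_real_diff:
  "Im (1 / (complex_of_real t - z)) = Im z / ((t - Re z)\<^sup>2 + (Im z)\<^sup>2)"
  by (simp add: Im_divide power2_eq_square complex_norm_square algebra_simps)

lemma abs_Omega_density_le_near:
  assumes "Im z > 0" "\<bar>t\<bar> \<le> R"
  shows "\<bar>Omega_density q z t\<bar>
    \<le> (1/pi) * (Im z / ((t - Re z)\<^sup>2 + (Im z)\<^sup>2) + (\<Sum>k=1..q. \<bar>Im (inverse (z ^ k))\<bar> * R ^ (k - 1)))"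
proof -
  define P where "P = Im z / ((t - Re z)\<^sup>2 + (Im z)\<^sup>2)"
  define S where "S = (\<Sum>k=1..q. Im (inverse (z ^ k)) * t ^ (k - 1))"
  define T where "T = (\<Sum>k=1..q. \<bar>Im (inverse (z ^ k))\<bar> * R ^ (k - 1))"
  have "\<bar>S\<bar> \<le> (\<Sum>k=1..q. \<bar>Im (inverse (z ^ k)) * t ^ (k - 1)\<bar>)"
    unfolding S_def by (rule sum_abs)
  also have "\<dots> \<le> T"
    unfolding T_def abs_mult power_abs using assms(2)
    by (intro sum_mono mult_left_mono power_mono) auto
  moreover have "0 \<le> P"
    using assms(1) by (simp add: P_def)
  ultimately have "\<bar>P + S\<bar> \<le> P + T"
    by linarith
  then have "(1/pi) * \<bar>P + S\<bar> \<le> (1/pi) * (P + T)"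
    by (rule mult_left_mono) simp
  then show ?thesis
    unfolding Omega_density_def Im_inverse_of_real_diff P_def[symmetric] S_def[symmetric] T_def[symmetric]
    by (simp add: abs_mult)
qed

lemma Poisson_kernel_nn_integral_le:
  assumes "Im z > 0"
  shows "(\<integral>\<^sup>+t. ennreal (Im z / ((t - Re z)\<^sup>2 + (Im z)\<^sup>2)) * indicator {a..b} t \<partial>lborel) \<le> ennreal pi"
proof (cases "a \<le> b")
  case True
  define x where "x = Re z"
  define y where "y = Im z"
  have y: "y > 0" using assms by (simp add: y_def)
  have "(\<integral>\<^sup>+t. ennreal (y / ((t - x)\<^sup>2 + y\<^sup>2)) * indicator {a..b} t \<partial>lborel)
        = ennreal (arctan ((b - x) / y) - arctan ((a - x) / y))"
  proof (rule nn_integral_FTC_Icc)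
    show "((\<lambda>t. arctan ((t - x) / y)) has_real_derivative y / ((t - x)\<^sup>2 + y\<^sup>2)) (at t)" for t
      using y by (auto intro!: derivative_eq_intros simp: field_simps power2_eq_square)
  qed (use y True in auto)
  also have "\<dots> \<le> ennreal pi"
    using arctan_bounded[of "(b - x) / y"] arctan_bounded[of "(a - x) / y"]
    by (intro ennreal_leI) linarith
  finally show ?thesis by (simp add: x_def y_def)
qed simp

lemma nn_integral_Omega_density_le_near:
  fixes q :: nat
  assumes z: "Im z > 0" and R: "R \<ge> 0"
  defines "T \<equiv> \<Sum>k=1..q. \<bar>Im (inverse (z ^ k))\<bar> * R ^ (k - 1)"
  shows "(\<integral>\<^sup>+t. ennreal (indicator {-R..R} t * \<bar>Omega_density q z t\<bar>) \<partial>lborel) \<le> ennreal (1 + 2 * R / pi * T)"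
proof -
  define Pz where "Pz t = Im z / ((t - Re z)\<^sup>2 + (Im z)\<^sup>2)" for t
  have Pz0: "0 \<le> Pz t" for t using z by (simp add: Pz_def)
  have T0: "0 \<le> T" unfolding T_def using R by (intro sum_nonneg) auto
  have "(\<integral>\<^sup>+t. ennreal (indicator {-R..R} t * \<bar>Omega_density q z t\<bar>) \<partial>lborel)
     \<le> (\<integral>\<^sup>+t. ennreal (1/pi) * (ennreal (Pz t) * indicator {-R..R} t) + ennreal (T / pi) * indicator {-R..R} t \<partial>lborel)"
  proof (intro nn_integral_mono)
    fix t :: real
    show "ennreal (indicator {-R..R} t * \<bar>Omega_density q z t\<bar>)
          \<le> ennreal (1/pi) * (ennreal (Pz t) * indicator {-R..R} t) + ennreal (T / pi) * indicator {-R..R} t"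
    proof (cases "t \<in> {-R..R}")
      case True
      then have "\<bar>t\<bar> \<le> R" by auto
      from abs_Omega_density_le_near[OF z this, of q]
      have "\<bar>Omega_density q z t\<bar> \<le> (1/pi) * (Pz t + T)"
        unfolding Pz_def T_def .
      also have "\<dots> = (1/pi) * Pz t + T / pi" by (simp add: field_simps)
      finally have "\<bar>Omega_density q z t\<bar> \<le> (1/pi) * Pz t + T / pi" .
      then have "ennreal \<bar>Omega_density q z t\<bar> \<le> ennreal (1/pi) * ennreal (Pz t) + ennreal (T / pi)"
        using Pz0[of t] T0 by (simp add: ennreal_leI flip: ennreal_plus ennreal_mult)
      then show ?thesis using True by simp
    qed simp
  qed
  also have "\<dots> = ennreal (1/pi) * (\<integral>\<^sup>+t. ennreal (Pz t) * indicator {-R..R} t \<partial>lborel)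
                   + ennreal (T / pi) * emeasure lborel {-R..R}"
    by (simp add: nn_integral_add nn_integral_cmult Pz_def)
  also have "\<dots> \<le> ennreal (1/pi) * ennreal pi + ennreal (T / pi) * ennreal (2 * R)"
    using Poisson_kernel_nn_integral_le[OF z, of "-R" R] R unfolding Pz_def
    by (intro add_mono mult_left_mono) auto
  also have "ennreal (1/pi) * ennreal pi = 1"
    by (simp flip: ennreal_mult)
  also have "ennreal (T / pi) * ennreal (2 * R) = ennreal (2 * R / pi * T)"
    using T0 R by (simp flip: ennreal_mult)
  also have "1 + ennreal (2 * R / pi * T) = ennreal (1 + 2 * R / pi * T)"
    using T0 R by (subst ennreal_plus) auto
  finally show ?thesis .
qed

lemma nn_integral_Omega_density_le_far:
  assumes z: "z \<noteq> 0" and R: "R \<ge> 0" and zR: "2 * R \<le> norm z"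
  shows "(\<integral>\<^sup>+t. ennreal (indicator {-R..R} t * \<bar>Omega_density q z t\<bar>) \<partial>lborel)
           \<le> ennreal (4/pi * R^(q+1) / norm z^(q+1))"
proof -
  define c where "c = 2/pi * R^q / norm z^(q+1)"
  have "(\<integral>\<^sup>+t. ennreal (indicator {-R..R} t * \<bar>Omega_density q z t\<bar>) \<partial>lborel)
     \<le> (\<integral>\<^sup>+t. ennreal c * indicator {-R..R} t \<partial>lborel)"
  proof (intro nn_integral_mono)
    fix t :: real
    show "ennreal (indicator {-R..R} t * \<bar>Omega_density q z t\<bar>) \<le> ennreal c * indicator {-R..R} t"
    proof (cases "t \<in> {-R..R}")
      case True
      then have tR: "\<bar>t\<bar> \<le> R" by auto
      then have "\<bar>Omega_density q z t\<bar> \<le> 2 / pi * \<bar>t\<bar> ^ q / norm z ^ (q + 1)"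
        using zR by (intro abs_Omega_density_le_far[OF z]) simp
      also have "\<dots> \<le> c"
        unfolding c_def using tR by (intro divide_right_mono mult_left_mono power_mono) auto
      finally show ?thesis using True by (simp add: ennreal_leI)
    qed simp
  qed
  also have "\<dots> = ennreal c * ennreal (2 * R)"
    using R by (simp add: nn_integral_cmult)
  also have "\<dots> = ennreal (4/pi * R^(q+1) / norm z^(q+1))"
    using R by (simp add: c_def field_simps flip: ennreal_mult del: ennreal_mult)
  finally show ?thesis .
qed

definition Omega_density_L1_bound :: "nat \<Rightarrow> real \<Rightarrow> complex \<Rightarrow> real" where
  "Omega_density_L1_bound q R z =
     (if 2 * R \<le> norm z then 4/pi * R^(q+1) / norm z^(q+1)
      else 1 + 2 * R / pi * (\<Sum>k=1..q. \<bar>Im (inverse (z ^ k))\<bar> * R ^ (k - 1)))"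

lemma Omega_density_L1_bound_nonneg: "R \<ge> 0 \<Longrightarrow> 0 \<le> Omega_density_L1_bound q R z"
  unfolding Omega_density_L1_bound_def
  by (auto intro!: add_nonneg_nonneg mult_nonneg_nonneg divide_nonneg_nonneg sum_nonneg)

lemma nn_integral_Omega_density_le:
  assumes "Im z > 0" "R \<ge> 0"
  shows "(\<integral>\<^sup>+t. ennreal (indicator {-R..R} t * \<bar>Omega_density q z t\<bar>) \<partial>lborel)
           \<le> ennreal (Omega_density_L1_bound q R z)"
  using nn_integral_Omega_density_le_far[of z R q] nn_integral_Omega_density_le_near[OF assms, of q] assms
  by (cases "z = 0"; cases "2 * R \<le> norm z") (auto simp: Omega_density_L1_bound_def)

definition real_trace :: "complex set \<Rightarrow> real set" where
  "real_trace B = {t. complex_of_real t \<in> B}"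

lemma real_trace_borel [measurable]: "B \<in> sets borel \<Longrightarrow> real_trace B \<in> sets borel"
proof -
  assume "B \<in> sets borel"
  moreover have "complex_of_real \<in> borel_measurable borel"
    by (intro borel_measurable_continuous_onI continuous_intros)
  ultimately have "complex_of_real -` B \<inter> space borel \<in> sets borel"
    by (rule measurable_sets[rotated])
  then show ?thesis by (simp add: real_trace_def vimage_def)
qed

lemma real_trace_subset: "B \<subseteq> cball 0 R \<Longrightarrow> real_trace B \<subseteq> {-R..R}"
  unfolding real_trace_def by (auto simp: subset_iff abs_le_iff)

lemma real_trace_cball: "real_trace (cball 0 R) = {-R..R}"
  by (auto simp: real_trace_def abs_le_iff)

lemma integrable_indicator_mult_continuous:
  fixes f :: "real \<Rightarrow> real"
  assumes "\<And>t. isCont f t" "S \<in> sets borel" "S \<subseteq> {-R..R}"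
  shows "integrable lborel (\<lambda>t. indicator S t * f t)"
proof -
  have "integrable lborel (\<lambda>t. f t * indicator {-R..R} t)"
    using assms(1) by (intro borel_integrable_atLeastAtMost) auto
  then have "integrable lborel (\<lambda>t. indicator S t *\<^sub>R (f t * indicator {-R..R} t))"
    by (rule integrable_mult_indicator[rotated]) (use assms(2) in simp)
  also have "(\<lambda>t. indicator S t *\<^sub>R (f t * indicator {-R..R} t)) = (\<lambda>t. indicator S t * f t)"
    using assms(3) by (auto simp: indicator_def fun_eq_iff)
  finally show ?thesis .
qed

lemma Omega_eq_integral:
  assumes z: "Im z > 0" and B: "B \<in> sets borel" "bounded B"
  shows "Omega q z B = (\<integral>t. indicator (real_trace B) t * Omega_density q z t \<partial>lborel)"
proof -
  from B(2) obtain R where "\<forall>x\<in>B. norm x \<le> R"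
    unfolding bounded_pos by blast
  then have "B \<subseteq> cball 0 R" by auto
  then have S: "real_trace B \<in> sets borel" "real_trace B \<subseteq> {-R..R}"
    using B(1) real_trace_subset by auto
  have "complex_of_real t - z \<noteq> 0" for t
    using z by (auto simp: complex_eq_iff)
  then have i0: "integrable lborel (\<lambda>t. indicator (real_trace B) t * Im (1 / (complex_of_real t - z)))"
    by (intro integrable_indicator_mult_continuous[OF _ S] continuous_intros) auto
  have ik: "integrable lborel (\<lambda>t. Im (inverse (z ^ k)) * (indicator (real_trace B) t * t ^ (k - 1)))" for k
    by (intro Bochner_Integration.integrable_mult_right integrable_indicator_mult_continuous[OF _ S]
        continuous_intros)
  have "(\<integral>t. indicator (real_trace B) t * Omega_density q z t \<partial>lborel)
      = (\<integral>t. (1/pi) * (indicator (real_trace B) t * Im (1 / (complex_of_real t - z))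
          + (\<Sum>k=1..q. Im (inverse (z ^ k)) * (indicator (real_trace B) t * t ^ (k - 1)))) \<partial>lborel)"
    unfolding Omega_density_def by (simp add: sum_distrib_left algebra_simps)
  also have "\<dots> = (1/pi) * ((\<integral>t. indicator (real_trace B) t * Im (1 / (complex_of_real t - z)) \<partial>lborel)
          + (\<Sum>k=1..q. Im (inverse (z ^ k)) * (\<integral>t. indicator (real_trace B) t * t ^ (k - 1) \<partial>lborel)))"
    using i0 ik by (simp add: Bochner_Integration.integral_add Bochner_Integration.integral_sum)
  also have "\<dots> = Omega q z B"
    unfolding Omega_def set_lebesgue_integral_def real_trace_def by (simp add: distrib_left)
  finally show ?thesis ..
qed

lemma abs_Omega_le_small_set:
  assumes z: "Im z > 0" and B: "B \<in> sets borel" "B \<subseteq> cball 0 r" and r: "r \<ge> 0" "2 * r \<le> norm z"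
  shows "\<bar>Omega q z B\<bar> \<le> 4/pi * r^(q+1) / norm z^(q+1)"
proof -
  have bB: "bounded B" using B(2) bounded_subset by blast
  have S: "real_trace B \<in> sets borel" "real_trace B \<subseteq> {-r..r}"
    using B real_trace_subset by auto
  have "complex_of_real t - z \<noteq> 0" for t
    using z by (auto simp: complex_eq_iff)
  then have "integrable lborel (\<lambda>t. indicator (real_trace B) t * Omega_density q z t)"
    unfolding Omega_density_def
    by (intro integrable_indicator_mult_continuous[OF _ S] continuous_intros) auto
  then have "ennreal \<bar>Omega q z B\<bar>
      \<le> (\<integral>\<^sup>+t. ennreal (norm (indicator (real_trace B) t * Omega_density q z t)) \<partial>lborel)"
    unfolding Omega_eq_integral[OF z B(1) bB] real_norm_def[symmetric]
    by (rule integral_norm_bound_ennreal)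
  also have "\<dots> \<le> (\<integral>\<^sup>+t. ennreal (indicator {-r..r} t * \<bar>Omega_density q z t\<bar>) \<partial>lborel)"
    using S(2) by (intro nn_integral_mono) (auto simp: indicator_def abs_mult)
  also have "\<dots> \<le> ennreal (4/pi * r^(q+1) / norm z^(q+1))"
    using z r by (intro nn_integral_Omega_density_le_far) auto
  finally show ?thesis
    using r by (subst (asm) ennreal_le_iff) auto
qed

section \<open>Integrability of the kernel against the charge\<close>

lemma Cup_borel [measurable]: "Cup \<in> sets borel"
  unfolding Cup_def by measurable

lemma sets_restr_up [simp, measurable_cong]: "sets (restr_up P) = sets P"
  by (simp add: restr_up_def)

lemma emeasure_restr_up:
  assumes "sets P = sets borel" "B \<in> sets borel"
  shows "emeasure (restr_up P) B = emeasure P (Cup \<inter> B)"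
  unfolding restr_up_def using assms by (intro emeasure_restricted) auto

lemma sets_borel_cball [measurable]: "cball (x::'a::metric_space) r \<in> sets borel"
  by (simp add: borel_closed)

lemma continuous_at_right_measure_cball:
  fixes M :: "'a::real_normed_vector measure"
  assumes "sets M = sets borel" "\<And>r. emeasure M (cball 0 r) < \<infinity>"
  shows "continuous (at_right a) (\<lambda>r. measure M (cball 0 r))"
  unfolding continuous_within
proof (rule tendsto_at_right_sequentially[of a "a + 1"])
  fix S :: "nat \<Rightarrow> real"
  assume S: "\<And>n. a < S n" "decseq S" "S \<longlonglongrightarrow> a"
  have dec: "decseq (\<lambda>n. cball (0::'a) (S n))"
    using S(2) unfolding decseq_def by (auto intro!: subset_cball)
  have Inter: "(\<Inter>n. cball (0::'a) (S n)) = cball 0 a"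
  proof (intro set_eqI iffI)
    fix x assume "x \<in> (\<Inter>n. cball (0::'a) (S n))"
    then show "x \<in> cball 0 a" using LIMSEQ_le_const[OF S(3), of "norm x"] by auto
  qed (use S(1) in \<open>auto intro: order_trans less_imp_le\<close>)
  have "range (\<lambda>n. cball 0 (S n)) \<subseteq> sets M"
    using assms(1) by (simp add: image_subset_iff borel_closed)
  from Lim_measure_decseq[OF this dec] assms(2)
  show "(\<lambda>n. measure M (cball 0 (S n))) \<longlonglongrightarrow> measure M (cball 0 a)"
    unfolding Inter by (simp add: less_top)
qed simp

lemma interval_measure_measure_cball:
  fixes M :: "'a::real_normed_vector measure"
  assumes sM: "sets M = sets borel" and fin: "\<And>r. emeasure M (cball 0 r) < \<infinity>"
  shows "interval_measure (\<lambda>r. measure M (cball 0 r)) = distr M borel norm"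
proof (rule measure_eqI_generator_eq[where \<Omega>=UNIV and E="range (\<lambda>(a, b). {a<..b::real})"
      and A="\<lambda>i. {-real i<..real i}"])
  let ?F = "\<lambda>r. measure M (cball 0 r)"
  have mono: "?F x \<le> ?F y" if "x \<le> y" for x y
    using that sM fin by (intro measure_mono_fmeasurable) (auto simp: fmeasurable_def)
  have rc: "continuous (at_right a) ?F" for a
    by (rule continuous_at_right_measure_cball[OF sM fin])
  show "Int_stable (range (\<lambda>(a, b). {a<..b::real}))"
  proof (rule Int_stableI)
    fix X Y assume "X \<in> range (\<lambda>(a, b). {a<..b::real})" "Y \<in> range (\<lambda>(a, b). {a<..b::real})"
    then obtain a b c d where "X = {a<..b}" "Y = {c<..d}" by auto
    then have "X \<inter> Y = (\<lambda>(a, b). {a<..b}) (max a c, min b d)" by auto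
    then show "X \<inter> Y \<in> range (\<lambda>(a, b). {a<..b::real})" by blast
  qed
  show "(\<Union>i. {-real i<..real i}) = UNIV"
  proof (intro set_eqI iffI)
    fix x :: real
    obtain n :: nat where "\<bar>x\<bar> < real n" using reals_Archimedean2 by blast
    then have "x \<in> {-real n<..real n}" by auto
    then show "x \<in> (\<Union>i. {-real i<..real i})" by blast
  qed auto
  show "emeasure (interval_measure ?F) {-real i<..real i} \<noteq> \<infinity>" for i
    using mono rc by (subst emeasure_interval_measure_Ioc) auto
  fix X assume "X \<in> range (\<lambda>(a, b). {a<..b::real})"
  then obtain a b where X: "X = {a<..b}" by auto
  show "emeasure (interval_measure ?F) X = emeasure (distr M borel norm) X"
  proof (cases "a \<le> b")
    case True
    have "emeasure (distr M borel norm) X = emeasure M (cball 0 b - cball 0 a)"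
      using sets_eq_imp_space_eq[OF sM] sM X by (subst emeasure_distr) (auto intro!: arg_cong[where f="emeasure M"])
    also have "\<dots> = ennreal (?F b - ?F a)"
      proof -
      have fm: "cball 0 r \<in> fmeasurable M" for r
        using sM fin by (auto simp: fmeasurable_def)
      have "emeasure M (cball 0 b - cball 0 a) = measure M (cball 0 b - cball 0 a)"
        using fm sM by (intro emeasure_eq_measure2 fmeasurable_Diff) auto
      also have "measure M (cball 0 b - cball 0 a) = ?F b - ?F a"
        using fin[of b] sM True by (intro measure_Diff subset_cball) auto
      finally show ?thesis .
    qed
    finally show ?thesis
      using X True mono rc by (simp add: emeasure_interval_measure_Ioc)
  qed (use X in simp)
qed (auto simp: borel_sigma_sets_Ioc)

lemma rad_tv_eq_measure_add_measure:
  fixes P N :: "complex measure"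
  assumes "sets P = sets borel" "sets N = sets borel"
    and "\<And>r. emeasure P (cball 0 r) < \<infinity>" "\<And>r. emeasure N (cball 0 r) < \<infinity>"
  shows "rad_tv P N r = measure (add_measure P N) (cball 0 r)"
  using assms unfolding rad_tv_def measure_def
  by (simp add: emeasure_add_measure enn2real_plus less_top)

lemma nn_integral_norm_le_interval_measure_rad_tv:
  fixes P N :: "complex measure" and g :: "real \<Rightarrow> ennreal"
  assumes sP: "sets P = sets borel" and sN: "sets N = sets borel"
    and fP: "\<And>r. emeasure P (cball 0 r) < \<infinity>" and fN: "\<And>r. emeasure N (cball 0 r) < \<infinity>"
    and g [measurable]: "g \<in> borel_measurable borel"
  shows "(\<integral>\<^sup>+z. g (norm z) \<partial>P) \<le> (\<integral>\<^sup>+t. g t \<partial>interval_measure (rad_tv P N))"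
proof -
  define Q where "Q = add_measure P N"
  have sQ: "sets Q = sets borel" using sP by (simp add: Q_def)
  have fQ: "emeasure Q (cball 0 r) < \<infinity>" for r
    using fP[of r] fN[of r] sP sN by (simp add: Q_def emeasure_add_measure ennreal_add_less_top)
  have "(\<integral>\<^sup>+z. g (norm z) \<partial>P) \<le> (\<integral>\<^sup>+z. g (norm z) \<partial>Q)"
    unfolding Q_def using sP sN
    by (intro nn_integral_mono_measure le_add_measure) auto
  also have "\<dots> = (\<integral>\<^sup>+t. g t \<partial>distr Q borel norm)"
    using sQ by (subst nn_integral_distr) (auto simp: measurable_cong_sets[OF sQ refl])
  also have "rad_tv P N = (\<lambda>r. measure Q (cball 0 r))"
    using rad_tv_eq_measure_add_measure[OF sP sN fP fN] by (auto simp: Q_def)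
  then have "distr Q borel norm = interval_measure (rad_tv P N)"
    by (simp add: interval_measure_measure_cball[OF sQ fQ])
  finally show ?thesis .
qed

lemma integrable_inverse_norm_power_outside_ball:
  fixes M :: "complex measure"
  assumes sM: "sets M = sets borel" and fM: "\<And>r. emeasure M (cball 0 r) < \<infinity>"
    and nn: "(\<integral>\<^sup>+ z. indicator {1..} (norm z) * ennreal (norm z powr - (real q + 1)) \<partial>M) < \<infinity>"
    and \<rho>: "\<rho> > 0"
  shows "integrable M (\<lambda>z. indicator {z. \<rho> \<le> norm z} z * (1 / norm z ^ (q + 1)))"
proof (rule integrableI_bounded)
  show "(\<lambda>z. indicator {z. \<rho> \<le> norm z} z * (1 / norm z ^ (q + 1))) \<in> borel_measurable M"
    unfolding measurable_cong_sets[OF sM refl] by measurable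
  define c where "c = 1 / \<rho> ^ (q + 1)"
  have "ennreal (norm (indicator {z. \<rho> \<le> norm z} z * (1 / norm z ^ (q + 1))))
     \<le> indicator {1..} (norm z) * ennreal (norm z powr - (real q + 1)) + ennreal c * indicator (cball 0 1) z"
    for z :: complex
  proof (cases "\<rho> \<le> norm z")
    case True
    then have zp: "norm z > 0" using \<rho> by auto
    show ?thesis
    proof (cases "1 \<le> norm z")
      case True
      have "- (real q + 1) = - real (q + 1)" by simp
      then have "norm z powr - (real q + 1) = inverse (norm z ^ (q + 1))"
        using zp by (simp only: powr_minus powr_realpow)
      then show ?thesis
        using \<open>\<rho> \<le> norm z\<close> True by (simp add: divide_inverse add_increasing2)
    next
      case False
      have "1 / norm z ^ (q + 1) \<le> c"
        unfolding c_def using True \<rho> zp by (intro divide_left_mono power_mono mult_pos_pos zero_less_power) auto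
      then show ?thesis
        using True False by (simp add: ennreal_leI)
    qed
  qed simp
  then have "(\<integral>\<^sup>+ z. ennreal (norm (indicator {z. \<rho> \<le> norm z} z * (1 / norm z ^ (q + 1)))) \<partial>M)
     \<le> (\<integral>\<^sup>+ z. indicator {1..} (norm z) * ennreal (norm z powr - (real q + 1))
                 + ennreal c * indicator (cball 0 1) z \<partial>M)"
    by (rule nn_integral_mono)
  also have "\<dots> = (\<integral>\<^sup>+ z. indicator {1..} (norm z) * ennreal (norm z powr - (real q + 1)) \<partial>M)
              + ennreal c * emeasure M (cball 0 1)"
    using sM by (subst nn_integral_add)
      (auto simp: measurable_cong_sets[OF sM refl] nn_integral_cmult_indicator)
  also have "\<dots> < \<infinity>"
    using nn fM[of 1] by (simp add: ennreal_add_less_top ennreal_mult_less_top)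
  finally show "(\<integral>\<^sup>+ z. ennreal (norm (indicator {z. \<rho> \<le> norm z} z * (1 / norm z ^ (q + 1)))) \<partial>M) < \<infinity>" .
qed

lemma convergence_class_commute: "convergence_class P N s = convergence_class N P s"
  unfolding convergence_class_def rad_tv_def by (simp add: add.commute)

lemma integrable_Cup_inverse_norm_power:
  fixes P N :: "complex measure"
  assumes nu: "charge P N" and conv: "convergence_class (restr_up P) (restr_up N) (real q + 1)"
    and \<rho>: "\<rho> > 0"
  shows "integrable P (\<lambda>z. indicator Cup z * (indicator {z. \<rho> \<le> norm z} z * (1 / norm z ^ (q + 1))))"
proof -
  have sP: "sets P = sets borel" and sN: "sets N = sets borel"
    using nu unfolding charge_def by auto
  have fin: "emeasure (restr_up P) (cball 0 r) < \<infinity>" "emeasure (restr_up N) (cball 0 r) < \<infinity>" for r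
    using charge_finite_cball[OF nu, of r] sP sN
    by (auto simp: emeasure_restr_up intro: le_less_trans[OF emeasure_mono])
  have "(\<integral>\<^sup>+z. indicator {1..} (norm z) * ennreal (norm z powr - (real q + 1)) \<partial>restr_up P)
      \<le> (\<integral>\<^sup>+t. indicator {1..} t * ennreal (t powr - (real q + 1)) \<partial>interval_measure (rad_tv (restr_up P) (restr_up N)))"
    using sP sN fin by (intro nn_integral_norm_le_interval_measure_rad_tv) auto
  also have "\<dots> < \<infinity>"
    using conv unfolding convergence_class_def .
  finally have "integrable (restr_up P) (\<lambda>z. indicator {z. \<rho> \<le> norm z} z * (1 / norm z ^ (q + 1)))"
    using sP fin \<rho> by (intro integrable_inverse_norm_power_outside_ball) auto
  moreover have "restr_up P = density P (\<lambda>z. ennreal (indicator Cup z))"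
    by (simp add: restr_up_def ennreal_indicator)
  ultimately have "integrable (density P (\<lambda>z. ennreal (indicator Cup z)))
      (\<lambda>z. indicator {z. \<rho> \<le> norm z} z * (1 / norm z ^ (q + 1)))"
    by simp
  then show ?thesis
    using sP by (subst (asm) integrable_density) (auto simp: measurable_cong_sets[OF sP refl])
qed

lemma abs_Im_inverse_power_le:
  assumes "r0 > 0"
  shows "\<bar>Im (inverse (z ^ k))\<bar> \<le> \<bar>indicator (ball 0 r0) z * Im (inverse (z ^ k))\<bar> + inverse (r0 ^ k)"
proof (cases "z \<in> ball 0 r0")
  case False
  then have "\<bar>Im (inverse (z ^ k))\<bar> \<le> inverse (norm z ^ k)"
    using abs_Im_le_cmod[of "inverse (z ^ k)"] by (simp add: norm_inverse norm_power)
  also have "\<dots> \<le> inverse (r0 ^ k)"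
    using False assms by (intro le_imp_inverse_le power_mono) auto
  finally show ?thesis using False by simp
qed (use assms in simp)

lemma Omega_density_L1_bound_le:
  assumes z: "z \<in> Cup" and r0: "r0 > 0" and R: "R \<ge> 0"
  shows "Omega_density_L1_bound q R z
    \<le> 4/pi * R^(q+1) * (indicator {z. 2 * R \<le> norm z} z * (1 / norm z ^ (q + 1)))
      + (1 + 2 * R / pi * (\<Sum>k=1..q. inverse (r0 ^ k) * R ^ (k - 1))) * indicator (cball 0 (2 * R)) z
      + 2 * R / pi * (\<Sum>k=1..q. R ^ (k - 1) * \<bar>indicator (ball 0 r0 \<inter> Cup) z *\<^sub>R Im (inverse (z ^ k))\<bar>)"
    (is "_ \<le> ?far + ?C * _ + 2 * R / pi * ?L")
proof (cases "2 * R \<le> norm z")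
  case True
  have "0 \<le> ?C" "0 \<le> ?L"
    using R r0 by (auto intro!: add_nonneg_nonneg mult_nonneg_nonneg divide_nonneg_nonneg sum_nonneg)
  then show ?thesis
    using True R unfolding Omega_density_L1_bound_def by simp
next
  case False
  have "(\<Sum>k=1..q. \<bar>Im (inverse (z ^ k))\<bar> * R ^ (k - 1))
      \<le> (\<Sum>k=1..q. (\<bar>indicator (ball 0 r0) z * Im (inverse (z ^ k))\<bar> + inverse (r0 ^ k)) * R ^ (k - 1))"
    using abs_Im_inverse_power_le[OF r0] R by (intro sum_mono mult_right_mono) auto
  also have "\<dots> = ?L + (\<Sum>k=1..q. inverse (r0 ^ k) * R ^ (k - 1))"
    using z by (simp add: sum.distrib algebra_simps indicator_def)
  finally have "2 * R / pi * (\<Sum>k=1..q. \<bar>Im (inverse (z ^ k))\<bar> * R ^ (k - 1))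
      \<le> 2 * R / pi * (?L + (\<Sum>k=1..q. inverse (r0 ^ k) * R ^ (k - 1)))"
    using R by (intro mult_left_mono) auto
  then show ?thesis
    using False unfolding Omega_density_L1_bound_def by (simp add: distrib_left)
qed

lemma integrable_Omega_density_L1_bound:
  fixes P :: "complex measure"
  assumes sP: "sets P = sets borel" and fP: "\<And>r. emeasure P (cball 0 r) < \<infinity>"
    and far: "integrable P (\<lambda>z. indicator Cup z * (indicator {z. 2 * R \<le> norm z} z * (1 / norm z ^ (q + 1))))"
    and r0: "r0 > 0"
    and loc: "\<forall>k\<in>{1..q}. set_integrable P (ball 0 r0 \<inter> Cup) (\<lambda>z. Im (inverse (z ^ k)))"
    and R: "R \<ge> 0"
  shows "integrable P (\<lambda>z. indicator Cup z * Omega_density_L1_bound q R z)"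
proof (rule Bochner_Integration.integrable_bound)
  define H where "H z =
      4/pi * R^(q+1) * (indicator Cup z * (indicator {z. 2 * R \<le> norm z} z * (1 / norm z ^ (q + 1))))
      + (1 + 2 * R / pi * (\<Sum>k=1..q. inverse (r0 ^ k) * R ^ (k - 1))) * indicator (cball 0 (2 * R)) z
      + 2 * R / pi * (\<Sum>k=1..q. R ^ (k - 1) * \<bar>indicator (ball 0 r0 \<inter> Cup) z *\<^sub>R Im (inverse (z ^ k))\<bar>)"
    for z :: complex
  have [measurable]: "ball (0::complex) r0 \<inter> Cup \<in> sets borel" by measurable
  show "integrable P H"
    unfolding H_def
  proof (intro Bochner_Integration.integrable_add Bochner_Integration.integrable_mult_right
      Bochner_Integration.integrable_sum Bochner_Integration.integrable_abs)
    show "integrable P (indicator (cball 0 (2 * R)) :: complex \<Rightarrow> real)"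
      using fP[of "2 * R"] sP by (intro integrable_real_indicator) (auto simp: borel_closed)
  qed (use far loc in \<open>auto simp: set_integrable_def\<close>)
  show "(\<lambda>z. indicator Cup z * Omega_density_L1_bound q R z) \<in> borel_measurable P"
    unfolding measurable_cong_sets[OF sP refl] Omega_density_L1_bound_def by measurable
  have H0: "0 \<le> H z" for z
    unfolding H_def using R r0
    by (auto intro!: add_nonneg_nonneg mult_nonneg_nonneg divide_nonneg_nonneg sum_nonneg)
  have "indicator Cup z * Omega_density_L1_bound q R z \<le> H z" for z
    using Omega_density_L1_bound_le[OF _ r0 R, of z q] H0[of z] by (cases "z \<in> Cup") (simp_all add: H_def)
  then show "AE z in P. norm (indicator Cup z * Omega_density_L1_bound q R z) \<le> norm (H z)"
    using Omega_density_L1_bound_nonneg[OF R] H0 by (intro AE_I2) simp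
qed

lemma integrable_Omega_density_product:
  fixes P :: "complex measure"
  assumes sP: "sets P = sets borel" and fP: "\<And>r. emeasure P (cball 0 r) < \<infinity>"
    and GI: "integrable P (\<lambda>z. indicator Cup z * Omega_density_L1_bound q R z)" and R: "R \<ge> 0"
    and S: "S \<in> sets borel" "S \<subseteq> {-R..R}"
  shows "integrable (P \<Otimes>\<^sub>M lborel) (\<lambda>(z, t). indicator Cup z * (indicator S t * Omega_density q z t))"
    (is "integrable _ (case_prod ?F)")
proof (rule integrableI_bounded)
  interpret sigma_finite_measure P
    by (rule sigma_finite_measure_if_finite_cball[OF sP fP])
  interpret pair_sigma_finite P lborel ..
  show Fm: "case_prod ?F \<in> borel_measurable (P \<Otimes>\<^sub>M lborel)"
    unfolding split_beta' measurable_cong_sets[OF sets_pair_measure_cong[OF sP refl] refl]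
    using S by measurable
  have "(\<integral>\<^sup>+ x. ennreal (norm (case_prod ?F x)) \<partial>(P \<Otimes>\<^sub>M lborel))
      = (\<integral>\<^sup>+ z. \<integral>\<^sup>+ t. ennreal (norm (?F z t)) \<partial>lborel \<partial>P)"
    using Fm by (subst lborel.nn_integral_fst[symmetric]) auto
  also have "\<dots> \<le> (\<integral>\<^sup>+ z. ennreal (norm (indicator Cup z * Omega_density_L1_bound q R z)) \<partial>P)"
  proof (intro nn_integral_mono)
    fix z :: complex
    show "(\<integral>\<^sup>+ t. ennreal (norm (?F z t)) \<partial>lborel) \<le> ennreal (norm (indicator Cup z * Omega_density_L1_bound q R z))"
    proof (cases "z \<in> Cup")
      case True
      then have "(\<integral>\<^sup>+ t. ennreal (norm (?F z t)) \<partial>lborel)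
          \<le> (\<integral>\<^sup>+ t. ennreal (indicator {-R..R} t * \<bar>Omega_density q z t\<bar>) \<partial>lborel)"
        using S(2) by (intro nn_integral_mono) (auto simp: indicator_def abs_mult)
      also have "\<dots> \<le> ennreal (Omega_density_L1_bound q R z)"
        using True R by (intro nn_integral_Omega_density_le) (auto simp: Cup_def)
      finally show ?thesis
        using True Omega_density_L1_bound_nonneg[OF R] by simp
    qed simp
  qed
  also have "\<dots> < \<infinity>"
    using GI by (simp add: integrable_iff_bounded)
  finally show "(\<integral>\<^sup>+ x. ennreal (norm (case_prod ?F x)) \<partial>(P \<Otimes>\<^sub>M lborel)) < \<infinity>" .
qed

lemma Fubini_Omega:
  fixes P :: "complex measure"
  assumes sP: "sets P = sets borel" and fP: "\<And>r. emeasure P (cball 0 r) < \<infinity>"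
    and GI: "integrable P (\<lambda>z. indicator Cup z * Omega_density_L1_bound q R z)" and R: "R \<ge> 0"
    and B: "B \<in> sets borel" "B \<subseteq> cball 0 R"
  shows "set_integrable P Cup (\<lambda>z. Omega q z B)"
    and "integrable lborel (\<lambda>t. indicator (real_trace B) t * (\<integral>z. indicator Cup z * Omega_density q z t \<partial>P))"
    and "(\<integral>t. indicator (real_trace B) t * (\<integral>z. indicator Cup z * Omega_density q z t \<partial>P) \<partial>lborel)
         = (LINT z:Cup|P. Omega q z B)"
proof -
  interpret sigma_finite_measure P
    by (rule sigma_finite_measure_if_finite_cball[OF sP fP])
  interpret pair_sigma_finite P lborel ..
  define F where "F z t = indicator Cup z * (indicator (real_trace B) t * Omega_density q z t)" for z t
  have IF: "integrable (P \<Otimes>\<^sub>M lborel) (case_prod F)"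
    unfolding F_def using B(1) real_trace_subset[OF B(2)]
    by (intro integrable_Omega_density_product[OF sP fP GI R]) auto
  have inner_t: "(\<integral>t. F z t \<partial>lborel) = indicator Cup z * Omega q z B" for z
    using Omega_eq_integral[OF _ B(1) bounded_subset[OF bounded_cball B(2)], of z q]
    by (cases "z \<in> Cup") (simp_all add: F_def Cup_def)
  have inner_z: "(\<integral>z. F z t \<partial>P) = indicator (real_trace B) t * (\<integral>z. indicator Cup z * Omega_density q z t \<partial>P)" for t
    unfolding F_def mult.left_commute[of "indicator Cup _"] by simp
  show "set_integrable P Cup (\<lambda>z. Omega q z B)"
    using integrable_fst[OF IF] unfolding set_integrable_def inner_t by simp
  show "integrable lborel (\<lambda>t. indicator (real_trace B) t * (\<integral>z. indicator Cup z * Omega_density q z t \<partial>P))"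
    using integrable_snd[OF IF] unfolding inner_z .
  show "(\<integral>t. indicator (real_trace B) t * (\<integral>z. indicator Cup z * Omega_density q z t \<partial>P) \<partial>lborel)
         = (LINT z:Cup|P. Omega q z B)"
    using Fubini_integral[OF IF] unfolding inner_t inner_z set_lebesgue_integral_def by simp
qed

section \<open>Existence of the balayage\<close>

lemma emeasure_line_density:
  fixes g :: "real \<Rightarrow> real"
  assumes [measurable]: "g \<in> borel_measurable borel" and B: "B \<in> sets borel"
  shows "emeasure (density (distr lborel borel complex_of_real) (\<lambda>z. ennreal (g (Re z)))) B
       = (\<integral>\<^sup>+ t. ennreal (indicator (real_trace B) t * g t) \<partial>lborel)"
proof -
  have [measurable]: "complex_of_real \<in> borel_measurable borel"
    by (intro borel_measurable_continuous_onI continuous_intros)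
  have "emeasure (density (distr lborel borel complex_of_real) (\<lambda>z. ennreal (g (Re z)))) B
      = (\<integral>\<^sup>+ z. ennreal (g (Re z)) * indicator B z \<partial>distr lborel borel complex_of_real)"
    using B by (subst emeasure_density) auto
  also have "\<dots> = (\<integral>\<^sup>+ t. ennreal (g t) * indicator B (complex_of_real t) \<partial>lborel)"
    using B by (subst nn_integral_distr) auto
  also have "\<dots> = (\<integral>\<^sup>+ t. ennreal (indicator (real_trace B) t * g t) \<partial>lborel)"
    by (intro nn_integral_cong) (simp add: real_trace_def indicator_def)
  finally show ?thesis .
qed

lemma nn_integral_ennreal_less_top:
  fixes f :: "'a \<Rightarrow> real"
  assumes "integrable M f"
  shows "(\<integral>\<^sup>+ x. ennreal (f x) \<partial>M) < \<infinity>"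
proof -
  have "(\<integral>\<^sup>+ x. ennreal (f x) \<partial>M) \<le> (\<integral>\<^sup>+ x. ennreal (norm (f x)) \<partial>M)"
    by (intro nn_integral_mono ennreal_leI) simp
  also have "\<dots> < \<infinity>"
    using assms by (simp add: integrable_iff_bounded)
  finally show ?thesis .
qed

lemma charge_add_line_density:
  fixes P N :: "complex measure" and f :: "real \<Rightarrow> real"
  assumes nu: "charge P N" and f [measurable]: "f \<in> borel_measurable borel"
    and loc: "\<And>R. integrable lborel (\<lambda>t. indicator {-R..R} t * f t)"
  shows "\<exists>P' N'. charge P' N' \<and> (\<forall>B\<in>sets borel. bounded B \<longrightarrow>
           charge_val P' N' B = (\<integral>t. indicator (real_trace B) t * f t \<partial>lborel) + charge_val P N (B - Cup))"
proof -
  have sP: "sets P = sets borel" and sN: "sets N = sets borel"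
    and fP: "\<And>B. B \<in> sets borel \<Longrightarrow> bounded B \<Longrightarrow> emeasure P B < \<infinity>"
    and fN: "\<And>B. B \<in> sets borel \<Longrightarrow> bounded B \<Longrightarrow> emeasure N B < \<infinity>"
    using nu unfolding charge_def by auto
  define L where "L = distr lborel borel complex_of_real"
  define M1 where "M1 = add_measure (density P (indicator (- Cup))) (density L (\<lambda>z. ennreal (f (Re z))))"
  define M2 where "M2 = add_measure (density N (indicator (- Cup))) (density L (\<lambda>z. ennreal (- f (Re z))))"
  have iB: "integrable lborel (\<lambda>t. indicator (real_trace B) t * f t)"
    if B: "B \<in> sets borel" "bounded B" for B
  proof -
    from B(2) obtain R where "\<forall>x\<in>B. norm x \<le> R"
      unfolding bounded_pos by blast
    then have "real_trace B \<subseteq> {-R..R}"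
      by (intro real_trace_subset) auto
    then have "(\<lambda>t. indicator (real_trace B) t *\<^sub>R (indicator {-R..R} t * f t))
             = (\<lambda>t. indicator (real_trace B) t * f t)"
      by (auto simp: indicator_def fun_eq_iff)
    moreover have "integrable lborel (\<lambda>t. indicator (real_trace B) t *\<^sub>R (indicator {-R..R} t * f t))"
      using B(1) by (intro integrable_mult_indicator loc) auto
    ultimately show ?thesis by simp
  qed
  have eM1: "emeasure M1 B = emeasure P (- Cup \<inter> B) + (\<integral>\<^sup>+ t. ennreal (indicator (real_trace B) t * f t) \<partial>lborel)"
    and eM2: "emeasure M2 B = emeasure N (- Cup \<inter> B) + (\<integral>\<^sup>+ t. ennreal (- (indicator (real_trace B) t * f t)) \<partial>lborel)"
    if B: "B \<in> sets borel" for B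
    unfolding M1_def M2_def L_def using sP sN B emeasure_line_density[of "\<lambda>t. - f t"]
    by (simp_all add: emeasure_add_measure emeasure_restricted emeasure_line_density)
  have "emeasure M1 B < \<infinity>" "emeasure M2 B < \<infinity>" if B: "B \<in> sets borel" "bounded B" for B
    using fP[of "- Cup \<inter> B"] fN[of "- Cup \<inter> B"] B nn_integral_ennreal_less_top[OF iB[OF B]]
      nn_integral_ennreal_less_top[OF integrable_minus[OF iB[OF B]]]
    by (auto simp: eM1 eM2 ennreal_add_less_top bounded_Int)
  moreover have "sets M1 = sets borel" "sets M2 = sets borel"
    using sP sN by (simp_all add: M1_def M2_def)
  ultimately obtain P' N' where "charge P' N'"
    and PN': "\<And>B. B \<in> sets borel \<Longrightarrow> bounded B \<Longrightarrow> charge_val P' N' B = measure M1 B - measure M2 B"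
    using charge_of_measure_diff by metis
  moreover have "measure M1 B - measure M2 B
      = (\<integral>t. indicator (real_trace B) t * f t \<partial>lborel) + charge_val P N (B - Cup)"
    if B: "B \<in> sets borel" "bounded B" for B
    using fP[of "- Cup \<inter> B"] fN[of "- Cup \<inter> B"] B iB[OF B] nn_integral_ennreal_less_top[OF iB[OF B]]
      nn_integral_ennreal_less_top[OF integrable_minus[OF iB[OF B]]]
    by (simp add: measure_def eM1 eM2 enn2real_plus real_lebesgue_integral_def charge_val_def
        bounded_Int Diff_eq Int_commute)
  ultimately show ?thesis by auto
qed

lemma borel_measurable_integral_Omega_density:
  fixes P :: "complex measure"
  assumes sP: "sets P = sets borel" and fP: "\<And>r. emeasure P (cball 0 r) < \<infinity>"
  shows "(\<lambda>t. \<integral>z. indicator Cup z * Omega_density q z t \<partial>P) \<in> borel_measurable borel"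
proof -
  interpret sigma_finite_measure P
    by (rule sigma_finite_measure_if_finite_cball[OF sP fP])
  have "(\<lambda>(t, z). indicator Cup z * Omega_density q z t) \<in> borel_measurable (borel \<Otimes>\<^sub>M P)"
    unfolding split_beta' measurable_cong_sets[OF sets_pair_measure_cong[OF refl sP] refl] by measurable
  then show ?thesis
    by (rule borel_measurable_lebesgue_integral)
qed

lemma balayage_exists:
  fixes q :: nat and P N :: "complex measure"
  assumes nu: "charge P N"
    and loc: "\<exists>r0>0. \<forall>k\<in>{1..q}.
                set_integrable P (ball 0 r0 \<inter> Cup) (\<lambda>z. Im (inverse (z ^ k))) \<and>
                set_integrable N (ball 0 r0 \<inter> Cup) (\<lambda>z. Im (inverse (z ^ k)))"
    and conv: "convergence_class (restr_up P) (restr_up N) (real q + 1)"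
  shows "\<exists>P' N'. is_balayage q P N P' N'"
proof -
  have sP: "sets P = sets borel" and sN: "sets N = sets borel"
    using nu unfolding charge_def by auto
  note fP = charge_finite_cball(1)[OF nu] and fN = charge_finite_cball(2)[OF nu]
  obtain r0 where r0: "r0 > 0"
    and locP: "\<forall>k\<in>{1..q}. set_integrable P (ball 0 r0 \<inter> Cup) (\<lambda>z. Im (inverse (z ^ k)))"
    and locN: "\<forall>k\<in>{1..q}. set_integrable N (ball 0 r0 \<inter> Cup) (\<lambda>z. Im (inverse (z ^ k)))"
    using loc by blast
  have conv': "convergence_class (restr_up N) (restr_up P) (real q + 1)"
    using conv convergence_class_commute by blast
  have L1P: "integrable P (\<lambda>z. indicator Cup z * Omega_density_L1_bound q R z)"
    and L1N: "integrable N (\<lambda>z. indicator Cup z * Omega_density_L1_bound q R z)" if "R > 0" for R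
  proof -
    have "2 * R > 0" using that by simp
    show "integrable P (\<lambda>z. indicator Cup z * Omega_density_L1_bound q R z)"
      using that integrable_Cup_inverse_norm_power[OF nu conv \<open>2 * R > 0\<close>]
      by (intro integrable_Omega_density_L1_bound[OF sP fP _ r0 locP]) auto
    show "integrable N (\<lambda>z. indicator Cup z * Omega_density_L1_bound q R z)"
      using that integrable_Cup_inverse_norm_power[OF charge_sym[OF nu] conv' \<open>2 * R > 0\<close>]
      by (intro integrable_Omega_density_L1_bound[OF sN fN _ r0 locN]) auto
  qed
  define f where "f t = (\<integral>z. indicator Cup z * Omega_density q z t \<partial>P) - (\<integral>z. indicator Cup z * Omega_density q z t \<partial>N)"
    for t
  have f_measurable [measurable]: "f \<in> borel_measurable borel"
    unfolding f_def[abs_def]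
    using borel_measurable_integral_Omega_density[OF sP fP] borel_measurable_integral_Omega_density[OF sN fN]
    by measurable
  have Fubini: "set_integrable P Cup (\<lambda>z. Omega q z B) \<and> set_integrable N Cup (\<lambda>z. Omega q z B)
     \<and> integrable lborel (\<lambda>t. indicator (real_trace B) t * f t)
     \<and> (\<integral>t. indicator (real_trace B) t * f t \<partial>lborel) = (LINT z:Cup|P. Omega q z B) - (LINT z:Cup|N. Omega q z B)"
    if B: "B \<in> sets borel" "bounded B" for B
  proof -
    from B(2) obtain R where R: "R > 0" "\<forall>x\<in>B. norm x \<le> R"
      unfolding bounded_pos by blast
    then have "B \<subseteq> cball 0 R" by auto
    note FP = Fubini_Omega[OF sP fP L1P[OF R(1)] _ B(1) this] and FN = Fubini_Omega[OF sN fN L1N[OF R(1)] _ B(1) this]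
    show ?thesis
      using FP FN R(1) unfolding f_def right_diff_distrib by auto
  qed
  have "integrable lborel (\<lambda>t. indicator {-R..R} t * f t)" for R
    using Fubini[of "cball 0 R"] by (simp add: borel_closed real_trace_cball)
  then obtain P' N' where "charge P' N'" and PN': "\<forall>B\<in>sets borel. bounded B \<longrightarrow>
      charge_val P' N' B = (\<integral>t. indicator (real_trace B) t * f t \<partial>lborel) + charge_val P N (B - Cup)"
    using charge_add_line_density[OF nu f_measurable] by blast
  then have "is_balayage q P N P' N'"
    unfolding is_balayage_def using Fubini by auto
  then show ?thesis by blast
qed

section \<open>Growth of the balayage near the origin\<close>

lemma emeasure_compact_eq_0_if_locally_null:
  fixes M :: "'a::metric_space measure"
  assumes sM: "sets M = sets borel" and K: "compact K"
    and null: "\<And>x. x \<in> K \<Longrightarrow> \<exists>e>0. emeasure M (ball x e) = 0"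
  shows "emeasure M K = 0"
proof -
  from null obtain e where e: "\<And>x. x \<in> K \<Longrightarrow> e x > 0 \<and> emeasure M (ball x (e x)) = 0"
    by metis
  have "K \<subseteq> (\<Union>x\<in>K. ball x (e x))"
    using e by force
  then obtain C where C: "C \<subseteq> K" "finite C" "K \<subseteq> (\<Union>x\<in>C. ball x (e x))"
    using compactE_image[OF K, of K "\<lambda>x. ball x (e x)"] by blast
  have balls: "ball x r \<in> sets M" for x r
    using sM by (simp add: borel_open)
  have "(\<Union>x\<in>C. ball x (e x)) \<in> sets M"
    using sM by (simp add: borel_open open_UN)
  then have "emeasure M K \<le> emeasure M (\<Union>x\<in>C. ball x (e x))"
    by (rule emeasure_mono[OF C(3)])
  also have "\<dots> \<le> (\<Sum>x\<in>C. emeasure M (ball x (e x)))"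
    using balls by (intro emeasure_subadditive_finite[OF C(2)]) blast
  also have "\<dots> = 0"
    using e C(1) by (intro sum.neutral) blast
  finally show ?thesis by simp
qed

lemma emeasure_cball_eq_0_if_disjoint_support:
  assumes sP: "sets P = sets borel" and sN: "sets N = sets borel"
    and supp: "ball 0 r0 \<inter> charge_support P N = {}" and r: "r < r0"
  shows "emeasure P (cball 0 r) = 0" "emeasure N (cball 0 r) = 0"
proof -
  have "\<exists>e>0. emeasure P (ball z e) = 0 \<and> emeasure N (ball z e) = 0" if "z \<in> cball 0 r" for z
  proof -
    have "z \<in> ball 0 r0"
      using that r by simp
    then have "z \<notin> charge_support P N"
      using supp by blast
    then show ?thesis
      unfolding charge_support_def by (auto simp: not_gr_zero)
  qed
  then show "emeasure P (cball 0 r) = 0" "emeasure N (cball 0 r) = 0"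
    using sP sN by (metis emeasure_compact_eq_0_if_locally_null compact_cball)+
qed

text \<open>With A the Hahn set of the Jordan decomposition, P(E) = nu(E \<inter> A) and N(E) = - nu(E - A).\<close>

lemma rad_tv_le_if_charge_val_bounded:
  assumes nu: "charge P N"
    and bound: "\<And>B. B \<in> sets borel \<Longrightarrow> B \<subseteq> cball 0 r \<Longrightarrow> \<bar>charge_val P N B\<bar> \<le> c"
  shows "rad_tv P N r \<le> 2 * c"
proof -
  obtain A where A: "A \<in> sets borel" "emeasure P (- A) = 0" "emeasure N A = 0"
    and sP: "sets P = sets borel" and sN: "sets N = sets borel"
    using nu unfolding charge_def by blast
  let ?E = "cball (0::complex) r"
  have "- A \<in> sets borel" using A(1) by (metis Compl_eq_Diff_UNIV sets.compl_sets space_borel)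
  then have "- A \<in> null_sets P" "A \<in> null_sets N"
    using A sP sN by (auto simp: null_sets_def)
  then have "?E - A \<in> null_sets P" "?E \<inter> A \<in> null_sets N"
    using A(1) sP sN by (auto intro: null_sets_subset[of "- A"] null_sets_subset[of A] simp: borel_closed)
  moreover have "?E = (?E \<inter> A) \<union> (?E - A)" "?E = (?E - A) \<union> (?E \<inter> A)"
    by auto
  ultimately have "emeasure P ?E = emeasure P (?E \<inter> A)" "emeasure N ?E = emeasure N (?E - A)"
    using A(1) sP sN by (metis emeasure_Un_null_set sets.Diff sets.Int sets_borel_cball)+
  moreover have "measure P (?E - A) = 0" "measure N (?E \<inter> A) = 0"
    using \<open>?E - A \<in> null_sets P\<close> \<open>?E \<inter> A \<in> null_sets N\<close> by (simp_all add: measure_def null_setsD1)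
  ultimately have "measure P ?E = charge_val P N (?E \<inter> A)" "measure N ?E = - charge_val P N (?E - A)"
    unfolding charge_val_def measure_def by simp_all
  moreover have "?E \<inter> A \<in> sets borel" "?E - A \<in> sets borel"
    using A(1) by auto
  ultimately show ?thesis
    unfolding rad_tv_def using bound[of "?E \<inter> A"] bound[of "?E - A"] by auto
qed

lemma abs_set_integral_Omega_le:
  fixes P :: "complex measure" and q :: nat and \<rho> :: real
  defines "h \<equiv> \<lambda>z. indicator Cup z * (indicator {z. \<rho> \<le> norm z} z * (1 / norm z ^ (q + 1)))"
  assumes sP: "sets P = sets borel" and null: "emeasure P (cball 0 \<rho>) = 0"
    and hP: "integrable P h" and r: "r \<ge> 0" "2 * r \<le> \<rho>"
    and B: "B \<in> sets borel" "B \<subseteq> cball 0 r"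
  shows "\<bar>LINT z:Cup|P. Omega q z B\<bar> \<le> 4/pi * r^(q+1) * (\<integral>z. h z \<partial>P)"
proof -
  define K where "K = 4/pi * r^(q+1)"
  have K0: "0 \<le> K" unfolding K_def using r by simp
  have "AE z in P. z \<notin> cball 0 \<rho>"
    using null sP by (intro AE_not_in) (simp add: null_sets_def)
  then have AE_bound: "AE z in P. norm (indicator Cup z *\<^sub>R Omega q z B) \<le> K * h z"
  proof (rule AE_mp, intro AE_I2 impI)
    fix z :: complex assume "z \<notin> cball 0 \<rho>"
    then have "\<rho> \<le> norm z" by simp
    show "norm (indicator Cup z *\<^sub>R Omega q z B) \<le> K * h z"
    proof (cases "z \<in> Cup")
      case True
      then have "\<bar>Omega q z B\<bar> \<le> K / norm z ^ (q + 1)"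
        using \<open>\<rho> \<le> norm z\<close> r B unfolding K_def
        by (intro abs_Omega_le_small_set) (auto simp: Cup_def)
      then show ?thesis
        using True \<open>\<rho> \<le> norm z\<close> by (simp add: h_def)
    qed (simp add: h_def K0)
  qed
  have "\<bar>LINT z:Cup|P. Omega q z B\<bar> \<le> (\<integral>z. norm (indicator Cup z *\<^sub>R Omega q z B) \<partial>P)"
    unfolding set_lebesgue_integral_def real_norm_def[symmetric] by (rule integral_norm_bound)
  also have "\<dots> \<le> (\<integral>z. K * h z \<partial>P)"
  proof (rule integral_mono_AE'[OF _ AE_bound])
    show "integrable P (\<lambda>z. K * h z)"
      using hP by (rule Bochner_Integration.integrable_mult_right)
    show "AE z in P. 0 \<le> K * h z"
      using K0 by (intro AE_I2) (simp add: h_def)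
  qed
  finally show ?thesis
    unfolding K_def by simp
qed

lemma rad_tv_balayage_bigo:
  fixes q :: nat and P N P' N' :: "complex measure"
  assumes nu: "charge P N" and conv: "convergence_class (restr_up P) (restr_up N) (real q + 1)"
    and bal: "is_balayage q P N P' N'" and supp: "ball 0 r0 \<inter> charge_support P N = {}" and r0: "r0 > 0"
  shows "rad_tv P' N' \<in> O[at_right 0](\<lambda>t. t ^ (q + 1))"
proof -
  have sP: "sets P = sets borel" and sN: "sets N = sets borel"
    using nu unfolding charge_def by auto
  define \<rho> where "\<rho> = r0 / 2"
  have \<rho>: "\<rho> > 0" "\<rho> < r0" using r0 by (auto simp: \<rho>_def)
  note null = emeasure_cball_eq_0_if_disjoint_support[OF sP sN supp \<rho>(2)]
  define h where "h z = indicator Cup z * (indicator {z. \<rho> \<le> norm z} z * (1 / norm z ^ (q + 1)))" for z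
  have hP: "integrable P h" and hN: "integrable N h"
    unfolding h_def using \<rho>(1) integrable_Cup_inverse_norm_power[OF nu conv]
      integrable_Cup_inverse_norm_power[OF charge_sym[OF nu]] conv convergence_class_commute
    by blast+
  define K where "K = 4/pi * ((\<integral>z. h z \<partial>P) + (\<integral>z. h z \<partial>N))"
  have "\<bar>charge_val P' N' B\<bar> \<le> K * r^(q+1)"
    if r: "r \<ge> 0" "2 * r \<le> \<rho>" and B: "B \<in> sets borel" "B \<subseteq> cball 0 r" for r B
  proof -
    have "emeasure P (B - Cup) = 0" "emeasure N (B - Cup) = 0"
      using B r null sP sN by (auto intro!: emeasure_eq_0[of "cball 0 \<rho>"] simp: borel_closed)
    then have "charge_val P' N' B = (LINT z:Cup|P. Omega q z B) - (LINT z:Cup|N. Omega q z B)"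
      using bal B bounded_subset[OF bounded_cball B(2)]
      unfolding is_balayage_def charge_val_def by (simp add: measure_def)
    then show ?thesis
      using abs_set_integral_Omega_le[OF sP null(1) hP[unfolded h_def] r B]
        abs_set_integral_Omega_le[OF sN null(2) hN[unfolded h_def] r B]
      unfolding K_def h_def by (simp add: algebra_simps)
  qed
  then have "rad_tv P' N' r \<le> 2 * K * r^(q+1)" if "r \<ge> 0" "2 * r \<le> \<rho>" for r
    using rad_tv_le_if_charge_val_bounded[of P' N' r] bal that
    unfolding is_balayage_def by (simp add: mult.assoc)
  moreover have "rad_tv P' N' r \<ge> 0" for r
    unfolding rad_tv_def by simp
  ultimately have "\<forall>\<^sub>F r in at_right 0. norm (rad_tv P' N' r) \<le> 2 * K * norm (r ^ (q + 1))"
    unfolding eventually_at_right_field using \<rho>(1)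
    by (intro exI[of _ "\<rho> / 2"]) auto
  then show ?thesis
    by (rule bigoI)
qed

theorem theorem1:
  fixes q :: nat and P N :: "complex measure"
  assumes nu: "charge P N"
    and loc: "\<exists>r0>0. \<forall>k\<in>{1..q}.
                set_integrable P (ball 0 r0 \<inter> Cup) (\<lambda>z. Im (inverse (z ^ k))) \<and>
                set_integrable N (ball 0 r0 \<inter> Cup) (\<lambda>z. Im (inverse (z ^ k)))"
    and conv: "convergence_class (restr_up P) (restr_up N) (real q + 1)"
  shows "(\<exists>P' N'. is_balayage q P N P' N') \<and>
         (\<forall>P' N'. is_balayage q P N P' N' \<longrightarrow>
            (\<exists>r0>0. ball 0 r0 \<inter> charge_support P N = {}) \<longrightarrow>
            rad_tv P' N' \<in> O[at_right 0](\<lambda>t. t ^ (q + 1)))"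
  using balayage_exists[OF nu loc conv] rad_tv_balayage_bigo[OF nu conv] by blast

end
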